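(* Let $p$ be a positive integer, $\lambda\neq0$, $k\in\mathbb{N}$, and $f\in\mathcal{R}$ with $U_pf=\lambda f$. Then \[U_p\Big[\Big(x\frac{d}{dx}\Big)^kf\Big]=(p^k\lambda)\Big(x\frac{d}{dx}\Big)^kf.\] In other words, if $\lambda$ is an eigenvalue of $U_p$ with eigenfunction $f$, then $p^k\lambda$ is an eigenvalue of $U_p$ with eigenfunction $(x\frac{d}{dx})^kf$.
   Context: $\mathcal{R}$ denotes the real vector space of rational functions $f(x)=A(x)/B(x)$ with $A,B\in\mathbb{R}[x]$, $B(0)\neq 0$ and $\deg A<\deg B$. For $f$ with Taylor expansion $f(x)=\sum_{n\ge0}a_nx^n$ at $0$ and a positive integer $p$, $U_pf(x)=\sum_{n\ge 0}a_{pn}x^n$. *)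

theory Defs
  imports "HOL-Computational_Algebra.Computational_Algebra"
begin

text \<open>Rational functions f = A/B with B(0) \<noteq> 0 and deg A < deg B are represented by
their Taylor expansion at 0, i.e. the formal power series A/B.\<close>

definition rat_fun_R :: "real fps \<Rightarrow> bool" where
  "rat_fun_R f \<longleftrightarrow> (\<exists>A B :: real poly. poly B 0 \<noteq> 0 \<and> degree A < degree B
      \<and> f = fps_of_poly A / fps_of_poly B)"

definition U_op :: "nat \<Rightarrow> real fps \<Rightarrow> real fps" where
  "U_op p f = Abs_fps (\<lambda>n. f $ (p * n))"

definition xD :: "real fps \<Rightarrow> real fps" where
  "xD f = fps_X * fps_deriv f"

end

theory Submission
  imports Defs
begin

text \<open>The operator x d/dx multiplies the n-th Taylor coefficient by n, so its k-th iterate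
multiplies it by n^k, while U_p moves the coefficient of index p n to index n. Hence
U_p (x d/dx)^k = p^k (x d/dx)^k U_p, and since (x d/dx)^k is linear, an eigenfunction
of U_p for the eigenvalue lambda is mapped to one for p^k lambda.\<close>

lemma xD_nth: "xD f $ n = real n * f $ n"
  by (cases n) (simp_all add: xD_def fps_X_mult_nth del: of_nat_Suc)

lemma xD_funpow_nth: "(xD ^^ k) f $ n = real n ^ k * f $ n"
  by (induction k arbitrary: n) (simp_all add: xD_nth)

lemma xD_funpow_fps_const_mult:
  "(xD ^^ k) (fps_const c * f) = fps_const c * (xD ^^ k) f"
  by (rule fps_ext) (simp add: xD_funpow_nth)

lemma U_op_xD_funpow:
  "U_op p ((xD ^^ k) f) = fps_const (real p ^ k) * (xD ^^ k) (U_op p f)"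
  by (rule fps_ext) (simp add: U_op_def xD_funpow_nth power_mult_distrib)

theorem mainTheorem10:
  fixes p k :: nat and lam :: real and f :: "real fps"
  assumes "p > 0" and "lam \<noteq> 0" and "rat_fun_R f" and "U_op p f = fps_const lam * f"
  shows "U_op p ((xD ^^ k) f) = fps_const (real p ^ k * lam) * (xD ^^ k) f"
proof -
  have "U_op p ((xD ^^ k) f) = fps_const (real p ^ k) * (xD ^^ k) (fps_const lam * f)"
    using assms(4) by (simp add: U_op_xD_funpow)
  also have "\<dots> = fps_const (real p ^ k * lam) * (xD ^^ k) f"
    by (simp add: xD_funpow_fps_const_mult mult.assoc)
  finally show ?thesis .
qed

end
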